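(* Let $M$ be a complete pointed metric space and $Y$ a real Banach space. If $f \in \mathrm{Lip}_0(M,Y)$ attains its norm toward some vector (i.e. $f \in \mathrm{A}(M,Y)$), then the associated operator $T_f \in \mathcal{L}(\mathcal{F}(M),Y)$ quasi attains its norm (i.e. $T_f \in \mathrm{QNA}(\mathcal{F}(M),Y)$).
   Context: Throughout, metric spaces are complete and pointed, with base point $0$; $Y$ is a real Banach space. $\mathrm{Lip}_0(M,Y)$ is the Banach space of Lipschitz maps $f:M\to Y$ with $f(0)=0$, normed by $\|f\| = \sup_{p\neq q} \|f(p)-f(q)\|/d(p,q)$. A map $f\in \mathrm{Lip}_0(M,Y)$ attains its norm toward $y\in Y$ if there is a sequence $(p_n,q_n)$ in $M\times M$ with $p_n\neq q_n$ such that $[f(p_n)-f(q_n)]/d(p_n,q_n)\to y$ and $\|y\|=\|f\|$; $\mathrm{A}(M,Y)$ is the set of $f$ that attain their norm toward some $y\in Y$. The Lipschitz-free space $\mathcal{F}(M)$ is the closed linear span of the evaluations $\delta(x)$ ($\delta(x)(g)=g(x)$) in $\mathrm{Lip}_0(M,\mathbb{R})^*$; each $f\in\mathrm{Lip}_0(M,Y)$ corresponds to the unique $T_f\in\mathcal{L}(\mathcal{F}(M),Y)$ with $T_f(\delta(x))=f(x)$, and $\|T_f\|=\|f\|$. For Banach spaces $X,Y$, an operator $T\in\mathcal{L}(X,Y)$ quasi attains its norm, written $T\in\mathrm{QNA}(X,Y)$, if there exist a sequence $(x_n)\subset B_X$ and $y_0\in Y$ with $Tx_n\to y_0$ and $\|y_0\|=\|T\|$.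 *)

theory Defs
  imports "HOL-Analysis.Analysis"
begin

definition lip0 :: "'a::metric_space \<Rightarrow> ('a \<Rightarrow> 'b::real_normed_vector) set" where
  "lip0 z = {f. f z = 0 \<and> (\<exists>L. \<forall>p q. norm (f p - f q) \<le> L * dist p q)}"

definition lipnorm :: "('a::metric_space \<Rightarrow> 'b::real_normed_vector) \<Rightarrow> real" where
  "lipnorm f = Sup {norm (f p - f q) / dist p q | p q. p \<noteq> q}"

definition attains_toward :: "'a::metric_space \<Rightarrow> ('a \<Rightarrow> 'b::real_normed_vector) \<Rightarrow> 'b \<Rightarrow> bool" where
  "attains_toward z f y \<longleftrightarrow> f \<in> lip0 z \<and>
     (\<exists>p q. (\<forall>n. p n \<noteq> q n) \<and>
        ((\<lambda>n. (1 / dist (p n) (q n)) *\<^sub>R (f (p n) - f (q n))) \<longlonglongrightarrow> y) \<and>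
        norm y = lipnorm f)"

definition attainsA :: "'a::metric_space \<Rightarrow> ('a \<Rightarrow> 'b::real_normed_vector) set" where
  "attainsA z = {f. \<exists>y. attains_toward z f y}"

text \<open>Elements of Lip_0(M,R)^* are represented extensionally as functions on 'a \<Rightarrow> real
  vanishing outside Lip_0(M,R).  Dual norm:\<close>
definition dnorm :: "'a::metric_space \<Rightarrow> (('a \<Rightarrow> real) \<Rightarrow> real) \<Rightarrow> real" where
  "dnorm z \<phi> = Sup {\<bar>\<phi> g\<bar> | g. g \<in> lip0 z \<and> lipnorm g \<le> 1}"

definition lipdual :: "'a::metric_space \<Rightarrow> (('a \<Rightarrow> real) \<Rightarrow> real) set" where
  "lipdual z = {\<phi>. (\<forall>g. g \<notin> lip0 z \<longrightarrow> \<phi> g = 0) \<and>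
     (\<forall>g h a b. g \<in> lip0 z \<longrightarrow> h \<in> lip0 z \<longrightarrow>
        \<phi> (\<lambda>x. a * g x + b * h x) = a * \<phi> g + b * \<phi> h) \<and>
     (\<exists>C. \<forall>g \<in> lip0 z. \<bar>\<phi> g\<bar> \<le> C * lipnorm g)}"

definition delta :: "'a::metric_space \<Rightarrow> 'a \<Rightarrow> ('a \<Rightarrow> real) \<Rightarrow> real" where
  "delta z x = (\<lambda>g. if g \<in> lip0 z then g x else 0)"

text \<open>Lipschitz-free space: closed linear span of the evaluations in the dual.\<close>
definition free :: "'a::metric_space \<Rightarrow> (('a \<Rightarrow> real) \<Rightarrow> real) set" where
  "free z = {\<phi> \<in> lipdual z. \<forall>e>0. \<exists>(n::nat) (c::nat \<Rightarrow> real) (x::nat \<Rightarrow> 'a).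
      dnorm z (\<lambda>g. \<phi> g - (\<Sum>i<n. c i * delta z (x i) g)) < e}"

text \<open>T is the operator T_f : F(M) \<rightarrow> Y associated to f (bounded linear, T(delta x) = f x);
  such T is unique.\<close>
definition assoc_op :: "'a::metric_space \<Rightarrow> ('a \<Rightarrow> 'b::real_normed_vector)
    \<Rightarrow> ((('a \<Rightarrow> real) \<Rightarrow> real) \<Rightarrow> 'b) \<Rightarrow> bool" where
  "assoc_op z f T \<longleftrightarrow>
     (\<forall>\<phi> \<in> free z. \<forall>\<psi> \<in> free z. \<forall>a b.
        T (\<lambda>g. a * \<phi> g + b * \<psi> g) = a *\<^sub>R T \<phi> + b *\<^sub>R T \<psi>) \<and>
     (\<exists>C. \<forall>\<phi> \<in> free z. norm (T \<phi>) \<le> C * dnorm z \<phi>) \<and>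
     (\<forall>x. T (delta z x) = f x)"

definition opnorm_free :: "'a::metric_space \<Rightarrow> ((('a \<Rightarrow> real) \<Rightarrow> real) \<Rightarrow> 'b::real_normed_vector) \<Rightarrow> real" where
  "opnorm_free z T = Sup {norm (T \<phi>) | \<phi>. \<phi> \<in> free z \<and> dnorm z \<phi> \<le> 1}"

definition qna_free :: "'a::metric_space \<Rightarrow> ((('a \<Rightarrow> real) \<Rightarrow> real) \<Rightarrow> 'b::real_normed_vector) \<Rightarrow> bool" where
  "qna_free z T \<longleftrightarrow> (\<exists>\<mu> y0. (\<forall>n. \<mu> n \<in> free z \<and> dnorm z (\<mu> n) \<le> 1) \<and>
      ((\<lambda>n. T (\<mu> n)) \<longlonglongrightarrow> y0) \<and> norm y0 = opnorm_free z T)"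

end

theory Submission
  imports Defs
begin

text \<open>
  The normalised differences m(p,q) = (delta p - delta q) / d(p,q) lie in the unit ball of F(M)
  and T_f m(p,q) = (f p - f q) / d(p,q). So the pairs along which f attains its norm toward y
  yield a sequence in the unit ball whose images converge to y, and it remains to show
  ||T_f|| = ||f||. The molecules give ||T_f|| >= ||f||. For the converse, by density and
  continuity it suffices to bound ||sum c_i f(x_i)|| by ||f|| ||sum c_i delta(x_i)||: take a
  functional h of norm one that norms this vector on the finite-dimensional span of the values
  f(x_i) (Hahn-Banach, proved by one-dimensional extensions), and extend h o f from the finite
  set {0, x_i} to a real Lipschitz map with the same constant (McShane). Testing
  sum c_i delta(x_i) against this map gives the bound.
\<close>

section \<open>Dominated extension of linear functionals in finite dimension\<close>

lemma dominated_extension_insert_value: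
  fixes \<phi> :: "'b::real_normed_vector \<Rightarrow> real"
  assumes lin: "linear \<phi>" and dom: "\<forall>u\<in>span S. \<phi> u \<le> norm u" and x: "x \<notin> span S"
    and plus: "\<forall>u\<in>span S. \<phi> u + c \<le> norm (u + x)"
    and minus: "\<forall>u\<in>span S. \<phi> u - c \<le> norm (u - x)"
  shows "\<exists>\<psi>. linear \<psi> \<and> (\<forall>u\<in>span S. \<psi> u = \<phi> u) \<and> \<psi> x = c \<and>
    (\<forall>y\<in>span (insert x S). \<psi> y \<le> norm y)"
proof -
  obtain B where B: "B \<subseteq> S" "independent B" "S \<subseteq> span B"
    by (rule maximal_independent_subset)
  have span_B: "span B = span S"
    using B by (intro antisym span_mono span_minimal) auto
  have "independent (insert x B)"
    using B(2) x span_B by (intro independent_insertI) auto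
  from linear_independent_extend[OF this, of "\<lambda>b. if b = x then c else \<phi> b"]
  obtain \<psi> where \<psi>: "linear \<psi>" "\<forall>b\<in>insert x B. \<psi> b = (if b = x then c else \<phi> b)"
    by blast
  have agree: "\<psi> u = \<phi> u" if "u \<in> span S" for u
  proof (rule linear_eq_on_span[OF \<psi>(1) lin])
    show "u \<in> span B" using that span_B by simp
    fix b assume "b \<in> B"
    moreover from this have "b \<noteq> x" using x B(1) span_base by blast
    ultimately show "\<psi> b = \<phi> b" using \<psi>(2) by simp
  qed
  have "\<psi> y \<le> norm y" if y: "y \<in> span (insert x S)" for y
  proof -
    obtain t where "y - t *\<^sub>R x \<in> span S"
      using y span_breakdown_eq by blast
    moreover define u where "u = y - t *\<^sub>R x"
    ultimately have u: "u \<in> span S" by simp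
    have "y = u + t *\<^sub>R x" by (simp add: u_def)
    then have "\<psi> y = \<phi> u + t * c"
      using \<psi> agree[OF u] by (simp add: linear_add linear_cmul)
    moreover have "\<phi> u + t * c \<le> norm (u + t *\<^sub>R x)"
    proof (cases t "0::real" rule: linorder_cases)
      case less
      have "\<phi> u + t * c = -t * (\<phi> ((1 / -t) *\<^sub>R u) - c)"
        using less linear_cmul[OF lin, of "1 / -t" u] by (simp add: algebra_simps)
      also have "\<dots> \<le> -t * norm ((1 / -t) *\<^sub>R u - x)"
        using less minus span_scale[OF u] by (intro mult_left_mono) (blast, simp)
      also have "\<dots> = norm ((-t) *\<^sub>R ((1 / -t) *\<^sub>R u - x))"
        using less by simp
      also have "(-t) *\<^sub>R ((1 / -t) *\<^sub>R u - x) = u + t *\<^sub>R x"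
        using less by (simp add: algebra_simps)
      finally show ?thesis .
    next
      case equal
      then show ?thesis using dom u by simp
    next
      case greater
      have "\<phi> u + t * c = t * (\<phi> ((1 / t) *\<^sub>R u) + c)"
        using greater linear_cmul[OF lin, of "1 / t" u] by (simp add: algebra_simps)
      also have "\<dots> \<le> t * norm ((1 / t) *\<^sub>R u + x)"
        using greater plus span_scale[OF u] by (intro mult_left_mono) (blast, simp)
      also have "\<dots> = norm (t *\<^sub>R ((1 / t) *\<^sub>R u + x))"
        using greater by simp
      also have "t *\<^sub>R ((1 / t) *\<^sub>R u + x) = u + t *\<^sub>R x"
        using greater by (simp add: algebra_simps)
      finally show ?thesis .
    qed
    ultimately show ?thesis by (simp add: u_def)
  qed
  then show ?thesis
    using \<psi> agree by auto
qed

lemma dominated_extension_insert: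
  fixes \<phi> :: "'b::real_normed_vector \<Rightarrow> real"
  assumes lin: "linear \<phi>" and dom: "\<forall>u\<in>span S. \<phi> u \<le> norm u"
  shows "\<exists>\<psi>. linear \<psi> \<and> (\<forall>u\<in>span S. \<psi> u = \<phi> u) \<and> (\<forall>y\<in>span (insert x S). \<psi> y \<le> norm y)"
proof (cases "x \<in> span S")
  case True
  then show ?thesis using lin dom by (auto simp: span_redundant)
next
  case False
  have sandwich: "\<phi> u - norm (u - x) \<le> norm (w + x) - \<phi> w" if "u \<in> span S" "w \<in> span S" for u w
  proof -
    have "\<phi> u + \<phi> w \<le> norm (u + w)"
      using dom span_add[OF that] by (simp flip: linear_add[OF lin])
    also have "\<dots> \<le> norm (u - x) + norm (w + x)"
      using norm_triangle_ineq[of "u - x" "w + x"] by simp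
    finally show ?thesis by simp
  qed
  define c where "c = Inf {norm (w + x) - \<phi> w | w. w \<in> span S}"
  have "bdd_below {norm (w + x) - \<phi> w | w. w \<in> span S}"
    using sandwich[OF span_zero] by (intro bdd_belowI[of _ "\<phi> 0 - norm x"]) auto
  then have c_below: "c \<le> norm (w + x) - \<phi> w" if "w \<in> span S" for w
    unfolding c_def using that by (intro cInf_lower) auto
  have c_above: "\<phi> u - norm (u - x) \<le> c" if "u \<in> span S" for u
    unfolding c_def using sandwich[OF that] by (intro cInf_greatest) (auto intro: span_zero)
  show ?thesis
    using dominated_extension_insert_value[OF lin dom False, of c] c_below c_above by fastforce
qed

lemma dominated_extension_finite:
  fixes \<phi> :: "'b::real_normed_vector \<Rightarrow> real"
  assumes "finite F" and lin: "linear \<phi>" and dom: "\<forall>u\<in>span S. \<phi> u \<le> norm u"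
  shows "\<exists>\<psi>. linear \<psi> \<and> (\<forall>u\<in>span S. \<psi> u = \<phi> u) \<and> (\<forall>y\<in>span (F \<union> S). \<psi> y \<le> norm y)"
  using \<open>finite F\<close>
proof (induction F rule: finite_induct)
  case empty
  then show ?case using lin dom by auto
next
  case (insert x F)
  then obtain \<psi> where \<psi>: "linear \<psi>" "\<forall>u\<in>span S. \<psi> u = \<phi> u" "\<forall>y\<in>span (F \<union> S). \<psi> y \<le> norm y"
    by blast
  obtain \<psi>' where \<psi>': "linear \<psi>'" "\<forall>u\<in>span (F \<union> S). \<psi>' u = \<psi> u"
    "\<forall>y\<in>span (insert x (F \<union> S)). \<psi>' y \<le> norm y"
    using dominated_extension_insert[OF \<psi>(1,3)] by blast
  have "span S \<subseteq> span (F \<union> S)" by (rule span_mono) blast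
  then show ?case using \<psi> \<psi>' by (intro exI[of _ \<psi>']) auto
qed

lemma norming_functional_on_span:
  fixes v :: "'b::real_normed_vector"
  assumes "finite F"
  shows "\<exists>\<phi>. linear \<phi> \<and> \<phi> v = norm v \<and> (\<forall>y\<in>span (insert v F). \<bar>\<phi> y\<bar> \<le> norm y)"
proof -
  obtain \<phi> where \<phi>: "linear \<phi>" "\<phi> v = norm v" "\<forall>y\<in>span {v}. \<phi> y \<le> norm y"
  proof (cases "v = 0")
    case True
    then show ?thesis using that[of "\<lambda>_. 0"] by (simp add: linear_zero)
  next
    case False
    then show ?thesis
      using that dominated_extension_insert_value[of "\<lambda>_. 0" "{}" v "norm v"]
      by (auto simp: linear_zero)
  qed
  obtain \<psi> where \<psi>: "linear \<psi>" "\<forall>u\<in>span {v}. \<psi> u = \<phi> u" "\<forall>y\<in>span (F \<union> {v}). \<psi> y \<le> norm y"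
    using dominated_extension_finite[OF assms \<phi>(1,3)] by blast
  have "\<bar>\<psi> y\<bar> \<le> norm y" if "y \<in> span (insert v F)" for y
    using \<psi>(3) that span_neg[OF that] linear_neg[OF \<psi>(1), of y] by (force simp: abs_le_iff)
  then show ?thesis using \<psi> \<phi>(2) span_base[of v "{v}"] by (intro exI[of _ \<psi>]) auto
qed

section \<open>Lipschitz functions and the dual norm\<close>

lemma mcshane_extension_finite:
  fixes h :: "'a::metric_space \<Rightarrow> real"
  assumes "finite A" "A \<noteq> {}" "K \<ge> 0" and lip: "\<forall>a\<in>A. \<forall>b\<in>A. h a - h b \<le> K * dist a b"
  shows "\<exists>G. (\<forall>a\<in>A. G a = h a) \<and> (\<forall>p q. G p - G q \<le> K * dist p q)"
proof -
  define G where "G y = Min ((\<lambda>a. h a + K * dist y a) ` A)" for y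
  have G_le: "G y \<le> h a + K * dist y a" if "a \<in> A" for y a
    unfolding G_def using assms(1) that by (intro Min_le) auto
  have G_attained: "\<exists>b\<in>A. G y = h b + K * dist y b" for y
  proof -
    have "G y \<in> (\<lambda>a. h a + K * dist y a) ` A"
      unfolding G_def using assms(1,2) by (intro Min_in) auto
    then show ?thesis by auto
  qed
  show ?thesis
  proof (intro exI conjI ballI allI)
    fix a assume a: "a \<in> A"
    obtain b where "b \<in> A" "G a = h b + K * dist a b" using G_attained by blast
    then have "h a \<le> G a" using lip a by force
    moreover have "G a \<le> h a" using G_le[OF a, of a] by simp
    ultimately show "G a = h a" by simp
  next
    fix p q
    obtain b where b: "b \<in> A" "G q = h b + K * dist q b" using G_attained by blast
    have "G p \<le> h b + K * dist p b" using G_le[OF b(1)] .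
    also have "K * dist p b \<le> K * (dist p q + dist q b)"
      using assms(3) dist_triangle by (intro mult_left_mono) auto
    finally show "G p - G q \<le> K * dist p q" using b by (simp add: algebra_simps)
  qed
qed

lemma lip0_lipnorm_bound:
  assumes "f \<in> lip0 z"
  shows "norm (f p - f q) \<le> lipnorm f * dist p q"
proof (cases "p = q")
  case False
  obtain L where L: "\<forall>p q. norm (f p - f q) \<le> L * dist p q" using assms unfolding lip0_def by blast
  have "bdd_above {norm (f p - f q) / dist p q | p q. p \<noteq> q}"
    using L by (intro bdd_aboveI[of _ L]) (auto simp: divide_le_eq)
  then have "norm (f p - f q) / dist p q \<le> lipnorm f"
    unfolding lipnorm_def using False by (intro cSup_upper) blast+
  then show ?thesis using False by (simp add: divide_le_eq)
qed simp

text \<open>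
  Since lipnorm is a supremum over pairs of distinct points, it is junk on a one-point space;
  this is why several lemmas assume two distinct points p0 and q0.
\<close>

lemma lipnorm_le:
  fixes f :: "'a::metric_space \<Rightarrow> 'b::real_normed_vector" and p0 q0 :: 'a
  assumes "p0 \<noteq> q0" "\<forall>p q. norm (f p - f q) \<le> K * dist p q"
  shows "lipnorm f \<le> K"
  unfolding lipnorm_def using assms by (intro cSup_least) (blast, auto simp: divide_le_eq)

lemma lipnorm_nonneg:
  fixes f :: "'a::metric_space \<Rightarrow> 'b::real_normed_vector" and z p0 q0 :: 'a
  assumes "f \<in> lip0 z" "p0 \<noteq> q0"
  shows "0 \<le> lipnorm f"
proof -
  have "0 \<le> lipnorm f * dist p0 q0"
    using lip0_lipnorm_bound[OF assms(1), of p0 q0] norm_ge_zero order_trans by blast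
  then show ?thesis using assms(2) by (simp add: zero_le_mult_iff)
qed

lemma lip0_zero: "(\<lambda>_. 0) \<in> lip0 z"
  unfolding lip0_def by (auto intro: exI[of _ 0])

lemma lipnorm_zero_le_one:
  fixes p0 q0 :: "'a::metric_space"
  assumes "p0 \<noteq> q0"
  shows "lipnorm (\<lambda>_::'a. 0::real) \<le> 1"
  using assms by (intro lipnorm_le) auto

lemma lip0_lincomb:
  fixes g h :: "'a::metric_space \<Rightarrow> real"
  assumes "g \<in> lip0 z" "h \<in> lip0 z"
  shows "(\<lambda>x. a * g x + b * h x) \<in> lip0 z"
proof -
  obtain L1 L2 where L1: "\<forall>p q. norm (g p - g q) \<le> L1 * dist p q"
    and L2: "\<forall>p q. norm (h p - h q) \<le> L2 * dist p q"
    using assms unfolding lip0_def by blast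
  have "\<bar>(a * g p + b * h p) - (a * g q + b * h q)\<bar> \<le> (\<bar>a\<bar> * L1 + \<bar>b\<bar> * L2) * dist p q" for p q
  proof -
    have "\<bar>(a * g p + b * h p) - (a * g q + b * h q)\<bar> = \<bar>a * (g p - g q) + b * (h p - h q)\<bar>"
      by (simp add: algebra_simps)
    also have "\<dots> \<le> \<bar>a\<bar> * \<bar>g p - g q\<bar> + \<bar>b\<bar> * \<bar>h p - h q\<bar>"
      by (metis abs_mult abs_triangle_ineq)
    also have "\<dots> \<le> \<bar>a\<bar> * (L1 * dist p q) + \<bar>b\<bar> * (L2 * dist p q)"
      using L1 L2 by (intro add_mono mult_left_mono) auto
    finally show ?thesis by (simp add: algebra_simps)
  qed
  then show ?thesis using assms unfolding lip0_def by auto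
qed

lemma abs_le_dnorm:
  fixes z p0 q0 :: "'a::metric_space"
  assumes "\<phi> \<in> lipdual z" "p0 \<noteq> q0" "g \<in> lip0 z" "lipnorm g \<le> 1"
  shows "\<bar>\<phi> g\<bar> \<le> dnorm z \<phi>"
proof -
  obtain C where C: "\<forall>g\<in>lip0 z. \<bar>\<phi> g\<bar> \<le> C * lipnorm g"
    using assms(1) unfolding lipdual_def by blast
  have "\<bar>\<phi> h\<bar> \<le> \<bar>C\<bar>" if "h \<in> lip0 z" "lipnorm h \<le> 1" for h
  proof -
    have "C * lipnorm h \<le> \<bar>C\<bar>"
      using lipnorm_nonneg[OF that(1) assms(2)] that(2)
      by (metis abs_ge_self abs_ge_zero mult_left_le order_trans mult_right_mono)
    then show ?thesis using C that(1) by force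
  qed
  then have "bdd_above {\<bar>\<phi> g\<bar> | g. g \<in> lip0 z \<and> lipnorm g \<le> 1}"
    by (intro bdd_aboveI[of _ "\<bar>C\<bar>"]) blast
  then show ?thesis
    unfolding dnorm_def using assms(3,4) by (intro cSup_upper) auto
qed

lemma dnorm_nonneg:
  fixes z p0 q0 :: "'a::metric_space"
  assumes "\<phi> \<in> lipdual z" "p0 \<noteq> q0"
  shows "0 \<le> dnorm z \<phi>"
  using abs_le_dnorm[OF assms lip0_zero lipnorm_zero_le_one[OF assms(2)]] by simp

lemma abs_le_dnorm_mult_lipnorm:
  fixes z p0 q0 :: "'a::metric_space"
  assumes \<phi>: "\<phi> \<in> lipdual z" and two: "p0 \<noteq> q0" and g: "g \<in> lip0 z"
  shows "\<bar>\<phi> g\<bar> \<le> dnorm z \<phi> * lipnorm g"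
proof -
  have \<phi>_scale: "\<phi> (\<lambda>x. a * g x) = a * \<phi> g" for a
  proof -
    have "\<phi> (\<lambda>x. a * g x + 0 * g x) = a * \<phi> g + 0 * \<phi> g"
      using \<phi> g unfolding lipdual_def by blast
    then show ?thesis by simp
  qed
  show ?thesis
  proof (cases "lipnorm g = 0")
    case True
    have "g x = 0" for x
      using lip0_lipnorm_bound[OF g, of x z] g True by (simp add: lip0_def)
    then have "g = (\<lambda>x. 0 * g x)" by (simp add: fun_eq_iff)
    then have "\<phi> g = 0"
      using \<phi>_scale[of 0] by simp
    then show ?thesis using True by simp
  next
    case False
    define L where "L = lipnorm g"
    have L: "L > 0" using False lipnorm_nonneg[OF g two] by (simp add: L_def)
    define g' where "g' = (\<lambda>x. (1 / L) * g x)"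
    have g': "g' \<in> lip0 z"
      using lip0_lincomb[OF g g, of "1 / L" 0] by (simp add: g'_def)
    have "lipnorm g' \<le> 1"
    proof (rule lipnorm_le[OF two], intro allI)
      fix p q
      show "norm (g' p - g' q) \<le> 1 * dist p q"
        using lip0_lipnorm_bound[OF g, of p q] L by (simp add: g'_def L_def field_simps)
    qed
    then have "\<bar>\<phi> g'\<bar> \<le> dnorm z \<phi>"
      by (rule abs_le_dnorm[OF \<phi> two g'])
    moreover have "\<phi> g = L * \<phi> g'"
      using L by (simp only: g'_def \<phi>_scale) simp
    ultimately show ?thesis
      using L by (simp add: L_def abs_mult mult.commute mult_left_mono)
  qed
qed

lemma dnorm_diff_le:
  fixes z p0 q0 :: "'a::metric_space"
  assumes "\<phi> \<in> lipdual z" "\<psi> \<in> lipdual z" "p0 \<noteq> q0"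
  shows "dnorm z (\<lambda>g. \<phi> g - \<psi> g) \<le> dnorm z \<phi> + dnorm z \<psi>"
  unfolding dnorm_def[of z "\<lambda>g. \<phi> g - \<psi> g"]
proof (rule cSup_least)
  show "{\<bar>\<phi> g - \<psi> g\<bar> |g. g \<in> lip0 z \<and> lipnorm g \<le> 1} \<noteq> {}"
    using lip0_zero lipnorm_zero_le_one[OF assms(3)] by blast
next
  fix r assume "r \<in> {\<bar>\<phi> g - \<psi> g\<bar> |g. g \<in> lip0 z \<and> lipnorm g \<le> 1}"
  then obtain g where "g \<in> lip0 z" "lipnorm g \<le> 1" "r = \<bar>\<phi> g - \<psi> g\<bar>" by blast
  then show "r \<le> dnorm z \<phi> + dnorm z \<psi>"
    using abs_le_dnorm[OF assms(1,3)] abs_le_dnorm[OF assms(2,3)] by fastforce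
qed

lemma lipdual_lincomb:
  fixes \<phi> \<psi> :: "('a::metric_space \<Rightarrow> real) \<Rightarrow> real"
  assumes "\<phi> \<in> lipdual z" "\<psi> \<in> lipdual z"
  shows "(\<lambda>g. a * \<phi> g + b * \<psi> g) \<in> lipdual z"
proof -
  obtain C1 C2 where C1: "\<forall>g\<in>lip0 z. \<bar>\<phi> g\<bar> \<le> C1 * lipnorm g"
    and C2: "\<forall>g\<in>lip0 z. \<bar>\<psi> g\<bar> \<le> C2 * lipnorm g"
    using assms unfolding lipdual_def by blast
  have "\<bar>a * \<phi> g + b * \<psi> g\<bar> \<le> (\<bar>a\<bar> * C1 + \<bar>b\<bar> * C2) * lipnorm g" if "g \<in> lip0 z" for g
  proof -
    have "\<bar>a * \<phi> g + b * \<psi> g\<bar> \<le> \<bar>a\<bar> * \<bar>\<phi> g\<bar> + \<bar>b\<bar> * \<bar>\<psi> g\<bar>"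
      by (metis abs_mult abs_triangle_ineq)
    also have "\<dots> \<le> \<bar>a\<bar> * (C1 * lipnorm g) + \<bar>b\<bar> * (C2 * lipnorm g)"
      using C1 C2 that by (intro add_mono mult_left_mono) auto
    finally show ?thesis by (simp add: algebra_simps)
  qed
  moreover have "(a * \<phi> g + b * \<psi> g) = 0" if "g \<notin> lip0 z" for g
    using assms that unfolding lipdual_def by simp
  moreover have "a * \<phi> (\<lambda>x. c * g x + d * h x) + b * \<psi> (\<lambda>x. c * g x + d * h x)
      = c * (a * \<phi> g + b * \<psi> g) + d * (a * \<phi> h + b * \<psi> h)"
    if "g \<in> lip0 z" "h \<in> lip0 z" for g h c d
    using assms that unfolding lipdual_def by (simp add: algebra_simps)
  ultimately show ?thesis
    unfolding lipdual_def by blast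
qed

section \<open>Finite combinations of evaluations\<close>

definition delta_comb :: "'a::metric_space \<Rightarrow> nat \<Rightarrow> (nat \<Rightarrow> real) \<Rightarrow> (nat \<Rightarrow> 'a) \<Rightarrow> ('a \<Rightarrow> real) \<Rightarrow> real"
  where "delta_comb z n c x = (\<lambda>g. \<Sum>i<n. c i * delta z (x i) g)"

lemma delta_comb_apply: "g \<in> lip0 z \<Longrightarrow> delta_comb z n c x g = (\<Sum>i<n. c i * g (x i))"
  by (simp add: delta_comb_def delta_def)

lemma delta_eq_delta_comb: "delta z y = delta_comb z 1 (\<lambda>_. 1) (\<lambda>_. y)"
  by (simp add: delta_comb_def)

lemma delta_comb_add:
  "delta_comb z m c x g + delta_comb z n d y g =
    delta_comb z (m + n) (\<lambda>i. if i < m then c i else d (i - m)) (\<lambda>i. if i < m then x i else y (i - m)) g"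
proof -
  have split: "(\<Sum>i<m + n. F i) = (\<Sum>i<m. F i) + (\<Sum>i<n. F (m + i))" for F :: "nat \<Rightarrow> real"
    by (induction n) (auto simp: add.assoc)
  show ?thesis
    unfolding delta_comb_def split by simp
qed

lemma delta_comb_lipdual: "delta_comb z n c x \<in> lipdual z"
  unfolding lipdual_def
proof (intro CollectI conjI allI impI)
  fix g :: "'a \<Rightarrow> real" assume "g \<notin> lip0 z"
  then show "delta_comb z n c x g = 0" by (simp add: delta_comb_def delta_def)
next
  fix g h :: "'a \<Rightarrow> real" and a b :: real assume g: "g \<in> lip0 z" and h: "h \<in> lip0 z"
  show "delta_comb z n c x (\<lambda>x. a * g x + b * h x) = a * delta_comb z n c x g + b * delta_comb z n c x h"
    unfolding delta_comb_apply[OF lip0_lincomb[OF g h]] delta_comb_apply[OF g] delta_comb_apply[OF h]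
    by (simp add: sum.distrib sum_distrib_left algebra_simps)
next
  have "\<bar>delta_comb z n c x g\<bar> \<le> (\<Sum>i<n. \<bar>c i\<bar> * dist (x i) z) * lipnorm g" if g: "g \<in> lip0 z" for g
  proof -
    have "\<bar>delta_comb z n c x g\<bar> \<le> (\<Sum>i<n. \<bar>c i\<bar> * \<bar>g (x i) - g z\<bar>)"
      using g sum_abs[of "\<lambda>i. c i * g (x i)" "{..<n}"] by (simp add: delta_comb_apply lip0_def abs_mult)
    also have "\<dots> \<le> (\<Sum>i<n. \<bar>c i\<bar> * (lipnorm g * dist (x i) z))"
      using lip0_lipnorm_bound[OF g] by (intro sum_mono mult_left_mono) auto
    also have "\<dots> = (\<Sum>i<n. \<bar>c i\<bar> * dist (x i) z) * lipnorm g"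
      by (simp add: sum_distrib_left sum_distrib_right mult_ac)
    finally show ?thesis .
  qed
  then show "\<exists>C. \<forall>g\<in>lip0 z. \<bar>delta_comb z n c x g\<bar> \<le> C * lipnorm g" by blast
qed

lemma dnorm_zero:
  fixes z p0 q0 :: "'a::metric_space"
  assumes "p0 \<noteq> q0"
  shows "dnorm z (\<lambda>_. 0) = 0"
proof -
  have "(\<lambda>_::'a. 0::real) \<in> lip0 z" "lipnorm (\<lambda>_::'a. 0::real) \<le> 1"
    using lip0_zero lipnorm_zero_le_one[OF assms] by blast+
  then have "{\<bar>0::real\<bar> | g :: 'a \<Rightarrow> real. g \<in> lip0 z \<and> lipnorm g \<le> 1} = {0}"
    by auto
  then show ?thesis unfolding dnorm_def by simp
qed

lemma delta_comb_free:
  fixes z p0 q0 :: "'a::metric_space"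
  assumes "p0 \<noteq> q0"
  shows "delta_comb z n c x \<in> free z"
  unfolding free_def
  using delta_comb_lipdual dnorm_zero[OF assms]
  by (auto simp: delta_comb_def intro!: exI[of _ n] exI[of _ c] exI[of _ x])

lemma free_diff_delta_comb:
  fixes z p0 q0 :: "'a::metric_space"
  assumes \<phi>: "\<phi> \<in> free z" and two: "p0 \<noteq> q0"
  shows "(\<lambda>g. \<phi> g - delta_comb z n c x g) \<in> free z"
  unfolding free_def
proof (intro CollectI conjI allI impI)
  have "(\<lambda>g. 1 * \<phi> g + (-1) * delta_comb z n c x g) \<in> lipdual z"
    using \<phi> delta_comb_lipdual unfolding free_def by (intro lipdual_lincomb) auto
  then show "(\<lambda>g. \<phi> g - delta_comb z n c x g) \<in> lipdual z"
    by simp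
next
  fix e :: real assume "e > 0"
  then obtain m d y where approx: "dnorm z (\<lambda>g. \<phi> g - delta_comb z m d y g) < e"
    using \<phi> unfolding free_def delta_comb_def by blast
  define C where "C i = (if i < m then d i else - c (i - m))" for i
  define X where "X i = (if i < m then y i else x (i - m))" for i
  have "delta_comb z (m + n) C X g = delta_comb z m d y g - delta_comb z n c x g" for g
    using delta_comb_add[where c = d and x = y and d = "\<lambda>i. - c i" and y = x]
    by (simp add: C_def X_def delta_comb_def sum_negf)
  then have "(\<lambda>g. \<phi> g - delta_comb z m d y g) =
      (\<lambda>g. (\<phi> g - delta_comb z n c x g) - delta_comb z (m + n) C X g)"
    by simp
  with approx show "\<exists>(N::nat) C X. dnorm z (\<lambda>g. (\<phi> g - delta_comb z n c x g) - (\<Sum>i<N. C i * delta z (X i) g)) < e"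
    unfolding delta_comb_def by (intro exI[of _ "m + n"] exI[of _ C] exI[of _ X]) simp
qed

lemma assoc_op_delta_comb:
  fixes z p0 q0 :: "'a::metric_space"
  assumes T: "assoc_op z f T" and two: "p0 \<noteq> q0"
  shows "T (delta_comb z n c x) = (\<Sum>i<n. c i *\<^sub>R f (x i))"
proof (induction n)
  case 0
  have "T (\<lambda>g. 0 * delta z z g + 0 * delta z z g) = 0 *\<^sub>R T (delta z z) + 0 *\<^sub>R T (delta z z)"
    using T delta_comb_free[OF two] unfolding assoc_op_def delta_eq_delta_comb by blast
  then show ?case by (simp add: delta_comb_def)
next
  case (Suc n)
  have "delta_comb z (Suc n) c x = (\<lambda>g. 1 * delta_comb z n c x g + c n * delta z (x n) g)"
    by (simp add: delta_comb_def)
  moreover have "T (\<lambda>g. 1 * delta_comb z n c x g + c n * delta z (x n) g) =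
      1 *\<^sub>R T (delta_comb z n c x) + c n *\<^sub>R T (delta z (x n))"
    using T delta_comb_free[OF two] unfolding assoc_op_def delta_eq_delta_comb by blast
  ultimately show ?case using Suc T by (simp add: assoc_op_def)
qed

section \<open>The norm of the operator associated with a Lipschitz map\<close>

text \<open>
  The functional h is only dominated by the norm on the span of the values of f on A,
  so h o f is Lipschitz only on A and has to be extended from there.
\<close>

lemma lip0_functional_extension:
  fixes f :: "'a::metric_space \<Rightarrow> 'b::real_normed_vector" and z p0 q0 :: 'a
  assumes f: "f \<in> lip0 z" and two: "p0 \<noteq> q0" and "finite A"
    and h: "linear h" "\<forall>y\<in>span (f ` A). \<bar>h y\<bar> \<le> norm y"
  shows "\<exists>G\<in>lip0 z. lipnorm G \<le> lipnorm f \<and> (\<forall>a\<in>A. G a = h (f a))"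
proof -
  define L where "L = lipnorm f"
  have fz: "f z = 0" using f by (simp add: lip0_def)
  have in_span: "f a \<in> span (f ` A)" if "a \<in> insert z A" for a
    using that fz by (auto intro: span_base span_zero)
  have "h (f a) - h (f b) \<le> L * dist a b" if "a \<in> insert z A" "b \<in> insert z A" for a b
  proof -
    have "h (f a) - h (f b) = h (f a - f b)" by (simp add: linear_diff[OF h(1)])
    also have "\<dots> \<le> norm (f a - f b)"
      using h(2) span_diff[OF in_span[OF that(1)] in_span[OF that(2)]] by fastforce
    also have "\<dots> \<le> L * dist a b" using lip0_lipnorm_bound[OF f] by (simp add: L_def)
    finally show ?thesis .
  qed
  then obtain G where G: "\<forall>a\<in>insert z A. G a = h (f a)" "\<forall>p q. G p - G q \<le> L * dist p q"
    using mcshane_extension_finite[of "insert z A" L "\<lambda>a. h (f a)"] \<open>finite A\<close>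
      lipnorm_nonneg[OF f two] by (auto simp: L_def)
  have G_lip: "\<forall>p q. norm (G p - G q) \<le> L * dist p q"
    using G(2) by (metis abs_le_iff dist_commute minus_diff_eq real_norm_def)
  have "G z = 0" using G(1) fz linear_0[OF h(1)] by simp
  with G_lip have "G \<in> lip0 z" unfolding lip0_def by blast
  moreover have "lipnorm G \<le> L" by (rule lipnorm_le[OF two G_lip])
  ultimately show ?thesis using G(1) by (auto simp: L_def)
qed

lemma norm_sum_le_lipnorm_mult_dnorm:
  fixes f :: "'a::metric_space \<Rightarrow> 'b::real_normed_vector" and z p0 q0 :: 'a
  assumes f: "f \<in> lip0 z" and two: "p0 \<noteq> q0"
  shows "norm (\<Sum>i<n. c i *\<^sub>R f (x i)) \<le> lipnorm f * dnorm z (delta_comb z n c x)"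
proof -
  define v where "v = (\<Sum>i<n. c i *\<^sub>R f (x i))"
  define A where "A = x ` {..<n}"
  have "v \<in> span (f ` A)"
    unfolding v_def A_def by (intro span_sum span_scale span_base) auto
  then have span_eq: "span (insert v (f ` A)) = span (f ` A)"
    by (rule span_redundant)
  obtain h where h: "linear h" "h v = norm v" "\<forall>y\<in>span (f ` A). \<bar>h y\<bar> \<le> norm y"
    using norming_functional_on_span[of "f ` A" v] span_eq by (auto simp: A_def)
  obtain G where G: "G \<in> lip0 z" "lipnorm G \<le> lipnorm f" "\<forall>a\<in>A. G a = h (f a)"
    using lip0_functional_extension[OF f two _ h(1,3)] by (auto simp: A_def)
  have "norm v = (\<Sum>i<n. c i * h (f (x i)))"
    using h(1,2) by (simp add: v_def linear_sum linear_cmul)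
  also have "\<dots> = delta_comb z n c x G"
    using G(1,3) by (simp add: delta_comb_apply A_def)
  also have "\<dots> \<le> dnorm z (delta_comb z n c x) * lipnorm G"
    using abs_le_dnorm_mult_lipnorm[OF delta_comb_lipdual two G(1), of n c x] by simp
  also have "\<dots> \<le> dnorm z (delta_comb z n c x) * lipnorm f"
    using G(2) dnorm_nonneg[OF delta_comb_lipdual two] by (rule mult_left_mono)
  finally show ?thesis by (simp add: v_def mult.commute)
qed

lemma le_of_forall_pos_le_add_mult:
  fixes x y M :: real
  assumes "\<And>e. e > 0 \<Longrightarrow> x \<le> y + M * e"
  shows "x \<le> y"
proof (rule field_le_epsilon)
  fix \<epsilon> :: real assume "\<epsilon> > 0"
  then have "x \<le> y + M * (\<epsilon> / (\<bar>M\<bar> + 1))"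
    by (intro assms) simp
  also have "M * (\<epsilon> / (\<bar>M\<bar> + 1)) \<le> \<epsilon>"
  proof -
    have "M * (\<epsilon> / (\<bar>M\<bar> + 1)) \<le> (\<bar>M\<bar> + 1) * (\<epsilon> / (\<bar>M\<bar> + 1))"
      using \<open>\<epsilon> > 0\<close> by (intro mult_right_mono) auto
    also have "\<dots> = \<epsilon>"
      by (simp add: add_nonneg_eq_0_iff)
    finally show ?thesis .
  qed
  finally show "x \<le> y + \<epsilon>" by simp
qed

lemma norm_assoc_op_le:
  fixes f :: "'a::metric_space \<Rightarrow> 'b::real_normed_vector" and z p0 q0 :: 'a
  assumes f: "f \<in> lip0 z" and T: "assoc_op z f T" and two: "p0 \<noteq> q0" and \<phi>: "\<phi> \<in> free z"
  shows "norm (T \<phi>) \<le> lipnorm f * dnorm z \<phi>"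
proof -
  define L where "L = lipnorm f"
  have L: "L \<ge> 0" using lipnorm_nonneg[OF f two] by (simp add: L_def)
  obtain C where C: "\<forall>\<phi>\<in>free z. norm (T \<phi>) \<le> C * dnorm z \<phi>"
    using T unfolding assoc_op_def by blast
  have T_lin: "T (\<lambda>g. a * \<phi> g + b * \<psi> g) = a *\<^sub>R T \<phi> + b *\<^sub>R T \<psi>"
    if "\<phi> \<in> free z" "\<psi> \<in> free z" for \<phi> \<psi> a b
    using T that unfolding assoc_op_def by blast
  have \<phi>_dual: "\<phi> \<in> lipdual z" using \<phi> by (simp add: free_def)
  have approx: "norm (T \<phi>) \<le> L * dnorm z \<phi> + (\<bar>C\<bar> + L) * e" if "e > 0" for e
  proof -
    obtain n c x where "dnorm z (\<lambda>g. \<phi> g - delta_comb z n c x g) < e"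
      using \<phi> \<open>e > 0\<close> unfolding free_def delta_comb_def by blast
    moreover define \<psi> \<kappa> where "\<psi> = delta_comb z n c x" and "\<kappa> = (\<lambda>g. \<phi> g - \<psi> g)"
    ultimately have \<kappa>_small: "dnorm z \<kappa> < e" by simp
    have \<psi>: "\<psi> \<in> free z"
      unfolding \<psi>_def by (rule delta_comb_free[OF two])
    have \<kappa>: "\<kappa> \<in> free z" "\<kappa> \<in> lipdual z"
      unfolding \<kappa>_def \<psi>_def using free_diff_delta_comb[OF \<phi> two] by (auto simp: free_def)
    have "T \<kappa> = T \<phi> - T \<psi>"
      using T_lin[OF \<phi> \<psi>, of 1 "-1"] by (simp add: \<kappa>_def)
    then have "norm (T \<phi>) \<le> norm (T \<kappa>) + norm (T \<psi>)"
      by (metis diff_add_cancel norm_triangle_ineq)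
    also have "norm (T \<kappa>) \<le> \<bar>C\<bar> * e"
    proof -
      have "norm (T \<kappa>) \<le> C * dnorm z \<kappa>" using C \<kappa>(1) by blast
      also have "\<dots> \<le> \<bar>C\<bar> * e"
        using \<kappa>_small dnorm_nonneg[OF \<kappa>(2) two] by (intro mult_mono) auto
      finally show ?thesis .
    qed
    also have "norm (T \<psi>) \<le> L * (dnorm z \<phi> + e)"
    proof -
      have "\<psi> = (\<lambda>g. \<phi> g - \<kappa> g)" by (simp add: \<kappa>_def)
      then have "dnorm z \<psi> \<le> dnorm z \<phi> + e"
        using dnorm_diff_le[OF \<phi>_dual \<kappa>(2) two] \<kappa>_small by simp
      moreover have "norm (T \<psi>) \<le> L * dnorm z \<psi>"
        using norm_sum_le_lipnorm_mult_dnorm[OF f two] assoc_op_delta_comb[OF T two]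
        by (simp add: \<psi>_def L_def)
      ultimately show ?thesis
        using mult_left_mono[OF _ L] by (meson order_trans)
    qed
    finally show ?thesis by (simp add: algebra_simps)
  qed
  show ?thesis
    using le_of_forall_pos_le_add_mult[OF approx] by (simp add: L_def)
qed

definition molecule :: "'a::metric_space \<Rightarrow> 'a \<Rightarrow> 'a \<Rightarrow> ('a \<Rightarrow> real) \<Rightarrow> real"
  where "molecule z p q = delta_comb z 2 (\<lambda>i. (-1) ^ i / dist p q) (\<lambda>i. if i = 0 then p else q)"

lemma molecule_apply: "g \<in> lip0 z \<Longrightarrow> molecule z p q g = (g p - g q) / dist p q"
  by (simp add: molecule_def delta_comb_apply numeral_2_eq_2 diff_divide_distrib)

lemma molecule_free: "p \<noteq> q \<Longrightarrow> molecule z p q \<in> free z"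
  unfolding molecule_def by (rule delta_comb_free)

lemma assoc_op_molecule:
  assumes "assoc_op z f T" "p \<noteq> q"
  shows "T (molecule z p q) = (1 / dist p q) *\<^sub>R (f p - f q)"
  using assoc_op_delta_comb[OF assms]
  by (simp add: molecule_def numeral_2_eq_2 scaleR_diff_right)

lemma dnorm_molecule_le:
  fixes z p q :: "'a::metric_space"
  assumes "p \<noteq> q"
  shows "dnorm z (molecule z p q) \<le> 1"
  unfolding dnorm_def
proof (rule cSup_least)
  show "{\<bar>molecule z p q g\<bar> |g. g \<in> lip0 z \<and> lipnorm g \<le> 1} \<noteq> {}"
    using lip0_zero lipnorm_zero_le_one[OF assms] by blast
next
  fix r assume "r \<in> {\<bar>molecule z p q g\<bar> |g. g \<in> lip0 z \<and> lipnorm g \<le> 1}"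
  then obtain g where g: "g \<in> lip0 z" "lipnorm g \<le> 1" and r: "r = \<bar>g p - g q\<bar> / dist p q"
    by (auto simp: molecule_apply)
  have "\<bar>g p - g q\<bar> \<le> 1 * dist p q"
    using lip0_lipnorm_bound[OF g(1), of p q] g(2) mult_right_mono[OF g(2), of "dist p q"] by simp
  then show "r \<le> 1" using assms by (simp add: r divide_le_eq)
qed

lemma opnorm_free_assoc_op:
  fixes f :: "'a::metric_space \<Rightarrow> 'b::real_normed_vector" and z p0 q0 :: 'a
  assumes f: "f \<in> lip0 z" and T: "assoc_op z f T" and two: "p0 \<noteq> q0"
  shows "opnorm_free z T = lipnorm f"
proof (rule antisym)
  have bound: "norm (T \<phi>) \<le> lipnorm f" if "\<phi> \<in> free z" "dnorm z \<phi> \<le> 1" for \<phi>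
    using norm_assoc_op_le[OF f T two that(1)] mult_left_le[OF that(2) lipnorm_nonneg[OF f two]]
    by linarith
  have unit_ball: "molecule z p q \<in> free z \<and> dnorm z (molecule z p q) \<le> 1" if "p \<noteq> q" for p q
    using that by (simp add: molecule_free dnorm_molecule_le)
  show "opnorm_free z T \<le> lipnorm f"
    unfolding opnorm_free_def using bound unit_ball[OF two] by (intro cSup_least) auto
  have "bdd_above {norm (T \<phi>) | \<phi>. \<phi> \<in> free z \<and> dnorm z \<phi> \<le> 1}"
    using bound by (intro bdd_aboveI[of _ "lipnorm f"]) auto
  then have "norm (f p - f q) / dist p q \<le> opnorm_free z T" if "p \<noteq> q" for p q
    unfolding opnorm_free_def using unit_ball[OF that] assoc_op_molecule[OF T that]
    by (intro cSup_upper) (auto intro!: exI[of _ "molecule z p q"])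
  then show "lipnorm f \<le> opnorm_free z T"
    unfolding lipnorm_def using two by (intro cSup_least) auto
qed

theorem lemma2p1:
  fixes z :: "'a::complete_space"
    and f :: "'a \<Rightarrow> 'b::banach"
    and T :: "(('a \<Rightarrow> real) \<Rightarrow> real) \<Rightarrow> 'b"
  assumes "f \<in> lip0 z"
    and "f \<in> attainsA z"
    and "assoc_op z f T"
  shows "qna_free z T"
proof -
  obtain y p q where pq: "\<And>n. p n \<noteq> q n"
    and lim: "(\<lambda>n. (1 / dist (p n) (q n)) *\<^sub>R (f (p n) - f (q n))) \<longlonglongrightarrow> y"
    and norm_y: "norm y = lipnorm f"
    using assms(2) unfolding attainsA_def attains_toward_def by blast
  define \<mu> where "\<mu> n = molecule z (p n) (q n)" for n
  show ?thesis
    unfolding qna_free_def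
  proof (intro exI conjI allI)
    show "\<mu> n \<in> free z" "dnorm z (\<mu> n) \<le> 1" for n
      using pq by (simp_all add: \<mu>_def molecule_free dnorm_molecule_le)
    show "(\<lambda>n. T (\<mu> n)) \<longlonglongrightarrow> y"
      using lim by (simp add: \<mu>_def assoc_op_molecule[OF assms(3) pq])
    show "norm y = opnorm_free z T"
      using norm_y opnorm_free_assoc_op[OF assms(1,3) pq] by simp
  qed
qed

end
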